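(* Let $R$ be a commutative ring. Every $w$-projective $w$-module over $R$ is $w$-split.
   Context: $R$ is a commutative ring with identity. For an $R$-module $M$ and $s\in R$, $\eta^M_s:M\to M$ is multiplication by $s$. GV-ideals and torsion: - An ideal $J$ of $R$ is a GV-ideal if $J$ is finitely generated and the natural map $R\to\mathrm{Hom}_R(J,R)$ is an isomorphism. $\mathrm{GV}(R)$ is the set of GV-ideals. - $\mathrm{tor_{GV}}(M)=\{x\in M: Jx=0\text{ for some }J\in\mathrm{GV}(R)\}$. - $M$ is GV-torsion if $\mathrm{tor_{GV}}(M)=M$, and GV-torsionfree if $\mathrm{tor_{GV}}(M)=0$. $w$-modules and $w$-projectivity: - A GV-torsionfree $M$ is a $w$-module if $\mathrm{Ext}^1_R(R/J,M)=0$ for all $J\in\mathrm{GV}(R)$. - For GV-torsionfree $M$, $M_w=\{x\in E(M): Jx\subseteq M\text{ for some }J\in\mathrm{GV}(R)\}$, where $E(M)$ is the injective envelope. - $M$ is $w$-projective if $\mathrm{Ext}^1_R(L(M),N)$ is GV-torsion for every torsionfree $w$-module $N$, where $L(M)=(M/\mathrm{tor_{GV}}(M))_w$. $w$-split: - A short exact sequence $0\to A\xrightarrow{f}B\xrightarrow{g}C\to 0$ is $w$-split if there exist $J=\langle d_1,\dots,d_n\rangle\in\mathrm{GV}(R)$ and $h_1,\dots,h_n\in\mathrm{Hom}_R(C,B)$ with $gh_k=\eta^C_{d_k}$ for all $k$. - $M$ is $w$-split if there is a $w$-split exact sequence $0\to K\to P\to M\to 0$ with $P$ projective. *)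

theory Defs
  imports "HOL-Algebra.Module" "HOL-Algebra.Ideal"
begin

definition lin :: "'r ring \<Rightarrow> ('r,'a) module \<Rightarrow> ('r,'b) module \<Rightarrow> ('a \<Rightarrow> 'b) \<Rightarrow> bool" where
  "lin R M N f \<longleftrightarrow> f \<in> carrier M \<rightarrow> carrier N
     \<and> (\<forall>x\<in>carrier M. \<forall>y\<in>carrier M. f (x \<oplus>\<^bsub>M\<^esub> y) = f x \<oplus>\<^bsub>N\<^esub> f y)
     \<and> (\<forall>r\<in>carrier R. \<forall>x\<in>carrier M. f (r \<odot>\<^bsub>M\<^esub> x) = r \<odot>\<^bsub>N\<^esub> f x)"

definition ring_mod :: "'r ring \<Rightarrow> ('r,'r) module" where
  "ring_mod R = \<lparr>carrier = carrier R, mult = mult R, one = one R, zero = zero R,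
                 add = add R, smult = mult R\<rparr>"

definition ideal_mod :: "'r ring \<Rightarrow> 'r set \<Rightarrow> ('r,'r) module" where
  "ideal_mod R J = (ring_mod R)\<lparr>carrier := J\<rparr>"

definition gv_ideal :: "'r ring \<Rightarrow> 'r set \<Rightarrow> bool" where
  "gv_ideal R J \<longleftrightarrow> ideal J R
     \<and> (\<exists>S. finite S \<and> S \<subseteq> carrier R \<and> J = Idl\<^bsub>R\<^esub> S)
     \<and> (\<forall>\<phi>. lin R (ideal_mod R J) (ring_mod R) \<phi> \<longrightarrow>
            (\<exists>!r. r \<in> carrier R \<and> (\<forall>a\<in>J. \<phi> a = r \<otimes>\<^bsub>R\<^esub> a)))"

definition tor_gv :: "'r ring \<Rightarrow> ('r,'a) module \<Rightarrow> 'a set" where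
  "tor_gv R M = {x \<in> carrier M. \<exists>J. gv_ideal R J \<and> (\<forall>a\<in>J. a \<odot>\<^bsub>M\<^esub> x = \<zero>\<^bsub>M\<^esub>)}"

definition gv_torsion :: "'r ring \<Rightarrow> ('r,'a) module \<Rightarrow> bool" where
  "gv_torsion R M \<longleftrightarrow> tor_gv R M = carrier M"

definition gv_torsionfree :: "'r ring \<Rightarrow> ('r,'a) module \<Rightarrow> bool" where
  "gv_torsionfree R M \<longleftrightarrow> tor_gv R M = {\<zero>\<^bsub>M\<^esub>}"

definition torsionfree :: "'r ring \<Rightarrow> ('r,'a) module \<Rightarrow> bool" where
  "torsionfree R M \<longleftrightarrow> (\<forall>s\<in>carrier R. (\<forall>t\<in>carrier R. s \<otimes>\<^bsub>R\<^esub> t = \<zero>\<^bsub>R\<^esub> \<longrightarrow> t = \<zero>\<^bsub>R\<^esub>) \<longrightarrow>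
       (\<forall>x\<in>carrier M. s \<odot>\<^bsub>M\<^esub> x = \<zero>\<^bsub>M\<^esub> \<longrightarrow> x = \<zero>\<^bsub>M\<^esub>))"

text \<open>Ext^1(R/J, M) = 0, computed from the presentation 0 \<rightarrow> J \<rightarrow> R \<rightarrow> R/J \<rightarrow> 0:
  Ext^1(R/J,M) = coker(Hom(R,M) \<rightarrow> Hom(J,M)), and Hom(R,M) = M via f \<mapsto> f 1.\<close>
definition ext1_quot_zero :: "'r ring \<Rightarrow> 'r set \<Rightarrow> ('r,'a) module \<Rightarrow> bool" where
  "ext1_quot_zero R J M \<longleftrightarrow>
     (\<forall>f. lin R (ideal_mod R J) M f \<longrightarrow> (\<exists>m\<in>carrier M. \<forall>a\<in>J. f a = a \<odot>\<^bsub>M\<^esub> m))"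

definition w_module :: "'r ring \<Rightarrow> ('r,'a) module \<Rightarrow> bool" where
  "w_module R M \<longleftrightarrow> gv_torsionfree R M \<and> (\<forall>J. gv_ideal R J \<longrightarrow> ext1_quot_zero R J M)"

definition quot_mod :: "'r ring \<Rightarrow> ('r,'a) module \<Rightarrow> 'a set \<Rightarrow> ('r,'a set) module" where
  "quot_mod R M T = \<lparr>carrier = a_rcosets\<^bsub>M\<^esub> T, mult = undefined, one = undefined,
      zero = T, add = set_add M,
      smult = (\<lambda>r X. \<Union>x\<in>X. T +>\<^bsub>M\<^esub> (r \<odot>\<^bsub>M\<^esub> x))\<rparr>"

definition injective_mod :: "'r ring \<Rightarrow> ('r,'e) module \<Rightarrow> bool" where
  "injective_mod R E \<longleftrightarrow> (\<forall>I f. ideal I R \<and> lin R (ideal_mod R I) E f \<longrightarrow>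
       (\<exists>e\<in>carrier E. \<forall>a\<in>I. f a = a \<odot>\<^bsub>E\<^esub> e))"

definition injective_envelope :: "'r ring \<Rightarrow> ('r,'a) module \<Rightarrow> ('r,'e) module \<Rightarrow> ('a \<Rightarrow> 'e) \<Rightarrow> bool" where
  "injective_envelope R M E \<iota> \<longleftrightarrow> module R E \<and> injective_mod R E
     \<and> lin R M E \<iota> \<and> inj_on \<iota> (carrier M)
     \<and> (\<forall>H. submodule H R E \<and> H \<noteq> {\<zero>\<^bsub>E\<^esub>} \<longrightarrow> H \<inter> \<iota> ` carrier M \<noteq> {\<zero>\<^bsub>E\<^esub>})"

definition w_hull :: "'r ring \<Rightarrow> ('r,'a) module \<Rightarrow> ('r,'e) module \<Rightarrow> ('a \<Rightarrow> 'e) \<Rightarrow> ('r,'e) module" where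
  "w_hull R M E \<iota> = E\<lparr>carrier := {x \<in> carrier E. \<exists>J. gv_ideal R J \<and>
        (\<forall>a\<in>J. a \<odot>\<^bsub>E\<^esub> x \<in> \<iota> ` carrier M)}\<rparr>"

definition free_mod :: "'r ring \<Rightarrow> ('r,'e) module \<Rightarrow> ('r,'e \<Rightarrow> 'r) module" where
  "free_mod R L = \<lparr>carrier = {c. (\<forall>x. c x \<in> carrier R) \<and> finite {x. c x \<noteq> \<zero>\<^bsub>R\<^esub>}
                                  \<and> {x. c x \<noteq> \<zero>\<^bsub>R\<^esub>} \<subseteq> carrier L},
      mult = undefined, one = undefined, zero = (\<lambda>x. \<zero>\<^bsub>R\<^esub>),
      add = (\<lambda>c d x. c x \<oplus>\<^bsub>R\<^esub> d x), smult = (\<lambda>r c x. r \<otimes>\<^bsub>R\<^esub> c x)\<rparr>"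

definition free_proj :: "'r ring \<Rightarrow> ('r,'e) module \<Rightarrow> ('e \<Rightarrow> 'r) \<Rightarrow> 'e" where
  "free_proj R L c = finsum L (\<lambda>x. c x \<odot>\<^bsub>L\<^esub> x) {x \<in> carrier L. c x \<noteq> \<zero>\<^bsub>R\<^esub>}"

definition free_ker :: "'r ring \<Rightarrow> ('r,'e) module \<Rightarrow> ('r,'e \<Rightarrow> 'r) module" where
  "free_ker R L = (free_mod R L)\<lparr>carrier :=
      {c \<in> carrier (free_mod R L). free_proj R L c = \<zero>\<^bsub>L\<^esub>}\<rparr>"

text \<open>With 0 \<rightarrow> K \<rightarrow> F \<rightarrow> L \<rightarrow> 0 the canonical free presentation of L,
  Ext^1(L,N) = Hom(K,N) / im Hom(F,N). It is GV-torsion iff each class [f] is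
  killed by some GV-ideal J, i.e. d f extends to F for every d \<in> J.\<close>
definition ext1_gv_torsion :: "'r ring \<Rightarrow> ('r,'e) module \<Rightarrow> ('r,'n) module \<Rightarrow> bool" where
  "ext1_gv_torsion R L N \<longleftrightarrow>
     (\<forall>f. lin R (free_ker R L) N f \<longrightarrow>
        (\<exists>J. gv_ideal R J \<and> (\<forall>d\<in>J. \<exists>g. lin R (free_mod R L) N g \<and>
            (\<forall>k\<in>carrier (free_ker R L). g k = d \<odot>\<^bsub>N\<^esub> f k))))"

text \<open>L(M) = (M / tor_GV(M))_w, computed inside an injective envelope E (carrier type 'e)
  of M/tor_GV(M). The test modules N range over modules with carrier type 'a \<Rightarrow> 'r.\<close>
definition w_projective :: "'r ring \<Rightarrow> ('r,'a) module \<Rightarrow> 'e itself \<Rightarrow> bool" where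
  "w_projective R M (_::'e itself) \<longleftrightarrow>
     (\<exists>(E::('r,'e) module) \<iota>.
        injective_envelope R (quot_mod R M (tor_gv R M)) E \<iota>
        \<and> (\<forall>N::('r,'a \<Rightarrow> 'r) module. module R N \<and> torsionfree R N \<and> w_module R N \<longrightarrow>
             ext1_gv_torsion R (w_hull R (quot_mod R M (tor_gv R M)) E \<iota>) N))"

definition projective_mod :: "'r ring \<Rightarrow> ('r,'p) module \<Rightarrow> 'q itself \<Rightarrow> bool" where
  "projective_mod R P (_::'q itself) \<longleftrightarrow> module R P \<and>
     (\<forall>(A::('r,'q) module) (B::('r,'q) module) g f.
        module R A \<and> module R B \<and> lin R A B g \<and> g ` carrier A = carrier B \<and> lin R P B f \<longrightarrow>
        (\<exists>h. lin R P A h \<and> (\<forall>x\<in>carrier P. g (h x) = f x)))"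

definition w_split_seq :: "'r ring \<Rightarrow> ('r,'c) module \<Rightarrow> ('r,'b) module \<Rightarrow> ('b \<Rightarrow> 'c) \<Rightarrow> bool" where
  "w_split_seq R C B g \<longleftrightarrow> (\<exists>J ds. gv_ideal R J \<and> set ds \<subseteq> carrier R \<and> J = Idl\<^bsub>R\<^esub> (set ds)
      \<and> (\<forall>d\<in>set ds. \<exists>h. lin R C B h \<and> (\<forall>x\<in>carrier C. g (h x) = d \<odot>\<^bsub>C\<^esub> x)))"

definition short_exact :: "'r ring \<Rightarrow> ('r,'k) module \<Rightarrow> ('r,'b) module \<Rightarrow> ('r,'c) module
     \<Rightarrow> ('k \<Rightarrow> 'b) \<Rightarrow> ('b \<Rightarrow> 'c) \<Rightarrow> bool" where
  "short_exact R A B C f g \<longleftrightarrow> module R A \<and> module R B \<and> module R C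
     \<and> lin R A B f \<and> lin R B C g \<and> inj_on f (carrier A) \<and> g ` carrier B = carrier C
     \<and> f ` carrier A = {y \<in> carrier B. g y = \<zero>\<^bsub>C\<^esub>}"

text \<open>The projective module P is taken with carrier type 'a \<Rightarrow> 'r (big enough for the
  free module on the carrier of M); projectivity is tested against modules of type 'q.\<close>
definition w_split :: "'r ring \<Rightarrow> ('r,'a) module \<Rightarrow> 'q itself \<Rightarrow> bool" where
  "w_split R M Q \<longleftrightarrow> (\<exists>(K::('r,'a \<Rightarrow> 'r) module) (P::('r,'a \<Rightarrow> 'r) module) f g.
      projective_mod R P Q \<and> short_exact R K P M f g \<and> w_split_seq R M P g)"

end

theory Submission
  imports Defs
begin

text \<open>A w-module M is GV-torsionfree and is its own w-envelope, so L(M) \<cong> M. Let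
  0 \<rightarrow> K \<rightarrow> F \<rightarrow> M \<rightarrow> 0 be the canonical free presentation. K is torsionfree, and it is a
  w-module because F is one and M is GV-torsionfree; so w-projectivity makes Ext^1(M, K)
  GV-torsion. For the class of the identity of K this yields a GV-ideal J such that for each
  d \<in> J the map d\<cdot>id_K extends to F. Subtracting the extension from d\<cdot>id_F gives a map
  vanishing on K, i.e. a map h : M \<rightarrow> F with \<pi> h = d\<cdot>id_M, which is w-splitness.\<close>

section \<open>Linear maps\<close>

lemma (in abelian_group) minus_eq_zero_iff:
  "x \<in> carrier G \<Longrightarrow> y \<in> carrier G \<Longrightarrow> x \<ominus> y = \<zero> \<longleftrightarrow> x = y"
  by (metis minus_closed r_zero add.inv_solve_right' minus_eq r_neg)

lemma lin_closed: "lin R X Y f \<Longrightarrow> x \<in> carrier X \<Longrightarrow> f x \<in> carrier Y"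
  by (auto simp: lin_def)

lemma lin_add:
  "lin R X Y f \<Longrightarrow> x \<in> carrier X \<Longrightarrow> y \<in> carrier X \<Longrightarrow> f (x \<oplus>\<^bsub>X\<^esub> y) = f x \<oplus>\<^bsub>Y\<^esub> f y"
  by (auto simp: lin_def)

lemma lin_smult:
  "lin R X Y f \<Longrightarrow> r \<in> carrier R \<Longrightarrow> x \<in> carrier X \<Longrightarrow> f (r \<odot>\<^bsub>X\<^esub> x) = r \<odot>\<^bsub>Y\<^esub> f x"
  by (auto simp: lin_def)

lemma lin_comp: "lin R X Y f \<Longrightarrow> lin R Y Z g \<Longrightarrow> lin R X Z (\<lambda>x. g (f x))"
  unfolding lin_def Pi_def by (auto simp del: Pi_I')

lemma lin_zero:
  assumes "module R X" "module R Y" "lin R X Y f"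
  shows "f \<zero>\<^bsub>X\<^esub> = \<zero>\<^bsub>Y\<^esub>"
proof -
  interpret X: module R X by fact
  interpret Y: module R Y by fact
  have "f \<zero>\<^bsub>X\<^esub> \<oplus>\<^bsub>Y\<^esub> f \<zero>\<^bsub>X\<^esub> = f \<zero>\<^bsub>X\<^esub>"
    using lin_add[OF assms(3) X.zero_closed X.zero_closed] by simp
  then show ?thesis
    using lin_closed[OF assms(3) X.zero_closed] by (metis Y.add.r_cancel_one')
qed

lemma lin_diff:
  assumes "module R X" "module R Y" "lin R X Y f" "x \<in> carrier X" "y \<in> carrier X"
  shows "f (x \<ominus>\<^bsub>X\<^esub> y) = f x \<ominus>\<^bsub>Y\<^esub> f y"
proof -
  interpret X: module R X by fact
  interpret Y: module R Y by fact
  have "f (x \<ominus>\<^bsub>X\<^esub> y) \<oplus>\<^bsub>Y\<^esub> f y = f x"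
    using assms lin_add[OF assms(3), of "x \<ominus>\<^bsub>X\<^esub> y" y] by (simp add: X.minus_eq X.add.m_assoc X.l_neg)
  then show ?thesis
    using assms lin_closed[OF assms(3)] by (metis X.minus_closed Y.add.inv_solve_right' Y.minus_eq)
qed

lemma lin_finsum:
  assumes "module R X" "module R Y" "lin R X Y f" "finite S" "u \<in> S \<rightarrow> carrier X"
  shows "f (finsum X u S) = finsum Y (\<lambda>i. f (u i)) S"
  using assms(4,5)
proof (induction S rule: finite_induct)
  case empty
  interpret X: module R X by fact
  interpret Y: module R Y by fact
  show ?case using lin_zero[OF assms(1-3)] by simp
next
  case (insert a S)
  interpret X: module R X by fact
  interpret Y: module R Y by fact
  have u: "u \<in> S \<rightarrow> carrier X" "u a \<in> carrier X" using insert by auto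
  then have "f (finsum X u (insert a S)) = f (u a) \<oplus>\<^bsub>Y\<^esub> f (finsum X u S)"
    using insert assms(3) by (simp add: lin_add X.finsum_closed)
  also have "\<dots> = finsum Y (\<lambda>i. f (u i)) (insert a S)"
    using insert u lin_closed[OF assms(3)] by (subst Y.finsum_insert) (auto simp: Pi_def)
  finally show ?case .
qed

lemma lin_compose_smult:
  assumes "module R Y" "lin R X Y f" "r \<in> carrier R"
  shows "lin R X Y (\<lambda>x. r \<odot>\<^bsub>Y\<^esub> f x)"
proof -
  interpret Y: module R Y by fact
  show ?thesis
    using assms lin_closed[OF assms(2)]
    by (auto simp: lin_def Y.smult_r_distr Y.smult_assoc1[symmetric] Y.R.m_comm)
qed

lemma lin_compose_diff:
  assumes "module R Y" "lin R X Y f" "lin R X Y g"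
  shows "lin R X Y (\<lambda>x. f x \<ominus>\<^bsub>Y\<^esub> g x)"
proof -
  interpret Y: module R Y by fact
  show ?thesis
    using assms lin_closed[OF assms(2)] lin_closed[OF assms(3)]
    by (auto simp: lin_def Y.minus_eq Y.minus_add Y.smult_r_distr Y.smult_r_minus Y.a_ac)
qed

lemma lin_kernel_submodule:
  assumes "module R X" "module R Y" "lin R X Y f"
  shows "submodule {x \<in> carrier X. f x = \<zero>\<^bsub>Y\<^esub>} R X"
proof -
  interpret X: module R X by fact
  interpret Y: module R Y by fact
  have "f (\<ominus>\<^bsub>X\<^esub> x) = \<zero>\<^bsub>Y\<^esub>" if "x \<in> carrier X" "f x = \<zero>\<^bsub>Y\<^esub>" for x
    using lin_diff[OF assms X.zero_closed that(1)] lin_zero[OF assms] that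
    by (simp add: X.minus_eq Y.minus_eq Y.r_neg)
  then show ?thesis
    using lin_add[OF assms(3)] lin_smult[OF assms(3)] lin_zero[OF assms]
    by (intro X.submoduleI) auto
qed

lemma lin_image_submodule:
  assumes "module R X" "module R Y" "lin R X Y f"
  shows "submodule (f ` carrier X) R Y"
proof -
  interpret X: module R X by fact
  interpret Y: module R Y by fact
  show ?thesis
  proof (rule Y.submoduleI)
    show "f ` carrier X \<subseteq> carrier Y" using lin_closed[OF assms(3)] by blast
    show "\<zero>\<^bsub>Y\<^esub> \<in> f ` carrier X" using lin_zero[OF assms] X.zero_closed by (metis image_eqI)
  next
    fix a assume "a \<in> f ` carrier X"
    then obtain x where x: "x \<in> carrier X" "a = f x" by blast
    then have "\<ominus>\<^bsub>Y\<^esub> a = f (\<ominus>\<^bsub>X\<^esub> x)"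
      using lin_diff[OF assms X.zero_closed x(1)] lin_zero[OF assms] lin_closed[OF assms(3)]
      by (simp add: X.minus_eq Y.minus_eq)
    then show "\<ominus>\<^bsub>Y\<^esub> a \<in> f ` carrier X" using x by blast
  next
    fix a b assume "a \<in> f ` carrier X" "b \<in> f ` carrier X"
    then obtain x y where "x \<in> carrier X" "y \<in> carrier X" "a = f x" "b = f y" by blast
    then show "a \<oplus>\<^bsub>Y\<^esub> b \<in> f ` carrier X"
      using lin_add[OF assms(3)] by (metis X.add.m_closed image_eqI)
  next
    fix r a assume "r \<in> carrier R" "a \<in> f ` carrier X"
    then obtain x where "x \<in> carrier X" "a = f x" by blast
    then show "r \<odot>\<^bsub>Y\<^esub> a \<in> f ` carrier X"
      using lin_smult[OF assms(3)] \<open>r \<in> carrier R\<close> by (metis X.smult_closed image_eqI)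
  qed
qed

section \<open>Free modules\<close>

definition free_basis :: "'r ring \<Rightarrow> 'e \<Rightarrow> 'e \<Rightarrow> 'r" where
  "free_basis R m = (\<lambda>y. if y = m then \<one>\<^bsub>R\<^esub> else \<zero>\<^bsub>R\<^esub>)"

definition free_lift :: "'r ring \<Rightarrow> ('r,'e) module \<Rightarrow> ('r,'b) module \<Rightarrow> ('e \<Rightarrow> 'b) \<Rightarrow> ('e \<Rightarrow> 'r) \<Rightarrow> 'b" where
  "free_lift R L A v c = finsum A (\<lambda>x. c x \<odot>\<^bsub>A\<^esub> v x) {x \<in> carrier L. c x \<noteq> \<zero>\<^bsub>R\<^esub>}"

lemma free_proj_eq_free_lift: "free_proj R L = free_lift R L L (\<lambda>x. x)"
  by (simp add: fun_eq_iff free_proj_def free_lift_def)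

lemma free_mod_carrier:
  "c \<in> carrier (free_mod R L) \<longleftrightarrow> (\<forall>x. c x \<in> carrier R) \<and> finite {x. c x \<noteq> \<zero>\<^bsub>R\<^esub>}
      \<and> {x. c x \<noteq> \<zero>\<^bsub>R\<^esub>} \<subseteq> carrier L"
  by (simp add: free_mod_def)

lemma free_mod_carrierD:
  assumes "c \<in> carrier (free_mod R L)"
  shows "c x \<in> carrier R" "finite {x. c x \<noteq> \<zero>\<^bsub>R\<^esub>}" "{x. c x \<noteq> \<zero>\<^bsub>R\<^esub>} \<subseteq> carrier L"
    "x \<notin> carrier L \<Longrightarrow> c x = \<zero>\<^bsub>R\<^esub>"
  using assms by (auto simp: free_mod_carrier)

lemma free_mod_simps [simp]:
  "\<zero>\<^bsub>free_mod R L\<^esub> = (\<lambda>x. \<zero>\<^bsub>R\<^esub>)"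
  "c \<oplus>\<^bsub>free_mod R L\<^esub> d = (\<lambda>x. c x \<oplus>\<^bsub>R\<^esub> d x)"
  "r \<odot>\<^bsub>free_mod R L\<^esub> c = (\<lambda>x. r \<otimes>\<^bsub>R\<^esub> c x)"
  by (simp_all add: free_mod_def)

lemma free_ker_simps [simp]:
  "\<zero>\<^bsub>free_ker R L\<^esub> = (\<lambda>x. \<zero>\<^bsub>R\<^esub>)"
  "c \<oplus>\<^bsub>free_ker R L\<^esub> d = (\<lambda>x. c x \<oplus>\<^bsub>R\<^esub> d x)"
  "r \<odot>\<^bsub>free_ker R L\<^esub> c = (\<lambda>x. r \<otimes>\<^bsub>R\<^esub> c x)"
  "carrier (free_ker R L) = {c \<in> carrier (free_mod R L). free_proj R L c = \<zero>\<^bsub>L\<^esub>}"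
  by (simp_all add: free_ker_def free_mod_def)

context
  fixes R :: "'r ring" (structure)
  assumes R_cring: "cring R"
begin

interpretation cring R by (rule R_cring)

lemma free_mod_add_closed:
  assumes "c \<in> carrier (free_mod R L)" "d \<in> carrier (free_mod R L)"
  shows "(\<lambda>x. c x \<oplus> d x) \<in> carrier (free_mod R L)"
proof -
  have "{x. c x \<oplus> d x \<noteq> \<zero>} \<subseteq> {x. c x \<noteq> \<zero>} \<union> {x. d x \<noteq> \<zero>}"
    using assms by (auto simp: free_mod_carrier)
  then show ?thesis using assms unfolding free_mod_carrier by (auto intro: finite_subset)
qed

lemma free_mod_smult_closed:
  assumes "r \<in> carrier R" "c \<in> carrier (free_mod R L)"
  shows "(\<lambda>x. r \<otimes> c x) \<in> carrier (free_mod R L)"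
proof -
  have "{x. r \<otimes> c x \<noteq> \<zero>} \<subseteq> {x. c x \<noteq> \<zero>}"
    using assms by (auto simp: free_mod_carrier)
  then show ?thesis using assms unfolding free_mod_carrier by (auto intro: finite_subset)
qed

lemma free_mod_module: "module R (free_mod R L)"
proof (rule moduleI)
  show "abelian_group (free_mod R L)"
  proof (rule abelian_groupI)
    fix c assume c: "c \<in> carrier (free_mod R L)"
    have "(\<lambda>x. \<ominus> c x) \<in> carrier (free_mod R L)"
      using c unfolding free_mod_carrier
      by (auto elim!: finite_subset[rotated] simp: minus_equality[symmetric])
    moreover have "(\<lambda>x. \<ominus> c x) \<oplus>\<^bsub>free_mod R L\<^esub> c = \<zero>\<^bsub>free_mod R L\<^esub>"
      using c by (auto simp: free_mod_carrier l_neg)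
    ultimately show "\<exists>d\<in>carrier (free_mod R L). d \<oplus>\<^bsub>free_mod R L\<^esub> c = \<zero>\<^bsub>free_mod R L\<^esub>"
      by blast
  qed (use free_mod_add_closed in \<open>auto simp: free_mod_carrier a_ac\<close>)
qed (use free_mod_smult_closed in \<open>auto simp: free_mod_carrier R_cring l_distr r_distr m_assoc\<close>)

lemma free_mod_finsum_apply:
  assumes "finite S" "u \<in> S \<rightarrow> carrier (free_mod R L)"
  shows "finsum (free_mod R L) u S y = (\<Oplus>i\<in>S. u i y)"
  using assms
proof (induction S rule: finite_induct)
  case empty
  interpret F: module R "free_mod R L" by (rule free_mod_module)
  show ?case by simp
next
  case (insert a S)
  interpret F: module R "free_mod R L" by (rule free_mod_module)
  have u: "u \<in> S \<rightarrow> carrier (free_mod R L)" "u a \<in> carrier (free_mod R L)"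
    using insert by auto
  then show ?case
    using insert by (simp add: F.finsum_insert finsum_insert Pi_def free_mod_carrier)
qed

lemma free_basis_closed: "m \<in> carrier L \<Longrightarrow> free_basis R m \<in> carrier (free_mod R L)"
  by (auto simp: free_mod_carrier free_basis_def)

lemma free_lift_eq:
  assumes "module R A" "v \<in> carrier L \<rightarrow> carrier A" "c \<in> carrier (free_mod R L)"
    "finite S" "{x. c x \<noteq> \<zero>} \<subseteq> S" "S \<subseteq> carrier L"
  shows "free_lift R L A v c = finsum A (\<lambda>x. c x \<odot>\<^bsub>A\<^esub> v x) S"
proof -
  interpret A: module R A by fact
  have "{x \<in> carrier L. c x \<noteq> \<zero>} = {x. c x \<noteq> \<zero>}"
    using free_mod_carrierD(3)[OF assms(3)] by auto
  then show ?thesis unfolding free_lift_def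
    using assms free_mod_carrierD[OF assms(3)]
    by (auto simp: Pi_def intro!: A.add.finprod_mono_neutral_cong_left)
qed

lemma free_lift_closed:
  assumes "module R A" "v \<in> carrier L \<rightarrow> carrier A" "c \<in> carrier (free_mod R L)"
  shows "free_lift R L A v c \<in> carrier A"
proof -
  interpret A: module R A by fact
  show ?thesis
    using funcset_mem[OF assms(2)] free_mod_carrierD(1)[OF assms(3)]
    by (auto simp: free_lift_def intro!: A.finsum_closed)
qed

lemma free_lift_add:
  assumes "module R A" "v \<in> carrier L \<rightarrow> carrier A"
    and c: "c \<in> carrier (free_mod R L)" and d: "d \<in> carrier (free_mod R L)"
  shows "free_lift R L A v (c \<oplus>\<^bsub>free_mod R L\<^esub> d) = free_lift R L A v c \<oplus>\<^bsub>A\<^esub> free_lift R L A v d"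
proof -
  interpret A: module R A by fact
  note vc = funcset_mem[OF assms(2)]
  let ?S = "{x. c x \<noteq> \<zero>} \<union> {x. d x \<noteq> \<zero>}"
  have S: "finite ?S" "?S \<subseteq> carrier L"
    using free_mod_carrierD[OF c] free_mod_carrierD[OF d] by auto
  have cd: "(\<lambda>x. c x \<oplus> d x) \<in> carrier (free_mod R L)"
    using c d by (rule free_mod_add_closed)
  have "{x. c x \<oplus> d x \<noteq> \<zero>} \<subseteq> ?S"
    using c d by (auto simp: free_mod_carrier)
  then have "free_lift R L A v (c \<oplus>\<^bsub>free_mod R L\<^esub> d) = finsum A (\<lambda>x. (c x \<oplus> d x) \<odot>\<^bsub>A\<^esub> v x) ?S"
    using free_lift_eq[OF assms(1,2) cd S(1) _ S(2)] by simp
  also have "\<dots> = finsum A (\<lambda>x. c x \<odot>\<^bsub>A\<^esub> v x \<oplus>\<^bsub>A\<^esub> d x \<odot>\<^bsub>A\<^esub> v x) ?S"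
    using S free_mod_carrierD[OF c] free_mod_carrierD[OF d] vc
    by (intro A.finsum_cong') (auto simp: A.smult_l_distr)
  also have "\<dots> = finsum A (\<lambda>x. c x \<odot>\<^bsub>A\<^esub> v x) ?S \<oplus>\<^bsub>A\<^esub> finsum A (\<lambda>x. d x \<odot>\<^bsub>A\<^esub> v x) ?S"
    using S free_mod_carrierD[OF c] free_mod_carrierD[OF d] vc
    by (intro A.finsum_addf) (auto simp: Pi_def)
  also have "\<dots> = free_lift R L A v c \<oplus>\<^bsub>A\<^esub> free_lift R L A v d"
    using free_lift_eq[OF assms(1,2) c S(1) _ S(2)] free_lift_eq[OF assms(1,2) d S(1) _ S(2)] by auto
  finally show ?thesis .
qed

lemma free_lift_smult:
  assumes "module R A" "v \<in> carrier L \<rightarrow> carrier A"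
    and r: "r \<in> carrier R" and c: "c \<in> carrier (free_mod R L)"
  shows "free_lift R L A v (r \<odot>\<^bsub>free_mod R L\<^esub> c) = r \<odot>\<^bsub>A\<^esub> free_lift R L A v c"
proof -
  interpret A: module R A by fact
  note vc = funcset_mem[OF assms(2)]
  let ?S = "{x. c x \<noteq> \<zero>}"
  have S: "finite ?S" "?S \<subseteq> carrier L" using free_mod_carrierD[OF c] by auto
  have rc: "(\<lambda>x. r \<otimes> c x) \<in> carrier (free_mod R L)"
    using r c by (rule free_mod_smult_closed)
  have "{x. r \<otimes> c x \<noteq> \<zero>} \<subseteq> ?S"
    using r free_mod_carrierD(1)[OF c] by auto
  then have "free_lift R L A v (r \<odot>\<^bsub>free_mod R L\<^esub> c) = finsum A (\<lambda>x. (r \<otimes> c x) \<odot>\<^bsub>A\<^esub> v x) ?S"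
    using free_lift_eq[OF assms(1,2) rc S(1) _ S(2)] by simp
  also have "\<dots> = finsum A (\<lambda>x. r \<odot>\<^bsub>A\<^esub> (c x \<odot>\<^bsub>A\<^esub> v x)) ?S"
    using S free_mod_carrierD[OF c] vc r
    by (intro A.finsum_cong') (auto simp: A.smult_assoc1)
  also have "\<dots> = r \<odot>\<^bsub>A\<^esub> finsum A (\<lambda>x. c x \<odot>\<^bsub>A\<^esub> v x) ?S"
    using S free_mod_carrierD[OF c] vc r
    by (intro A.finsum_smult_ldistr[symmetric]) (auto simp: Pi_def)
  also have "\<dots> = r \<odot>\<^bsub>A\<^esub> free_lift R L A v c"
    using free_lift_eq[OF assms(1,2) c S(1) _ S(2)] by auto
  finally show ?thesis .
qed

lemma free_lift_lin:
  assumes "module R A" "v \<in> carrier L \<rightarrow> carrier A"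
  shows "lin R (free_mod R L) A (free_lift R L A v)"
  using free_lift_closed[OF assms] free_lift_add[OF assms] free_lift_smult[OF assms]
  by (simp add: lin_def del: free_mod_simps)

lemma lin_free_lift:
  assumes "module R A" "module R B" "lin R A B f" "v \<in> carrier L \<rightarrow> carrier A"
    "c \<in> carrier (free_mod R L)"
  shows "f (free_lift R L A v c) = free_lift R L B (\<lambda>x. f (v x)) c"
proof -
  interpret B: module R B by fact
  have "f (free_lift R L A v c) = finsum B (\<lambda>x. f (c x \<odot>\<^bsub>A\<^esub> v x)) {x \<in> carrier L. c x \<noteq> \<zero>}"
    unfolding free_lift_def using assms free_mod_carrierD[OF assms(5)]
    by (intro lin_finsum[OF assms(1-3)]) (auto simp: Pi_def module.smult_closed)
  also have "\<dots> = free_lift R L B (\<lambda>x. f (v x)) c"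
    unfolding free_lift_def using assms free_mod_carrierD[OF assms(5)] lin_closed[OF assms(3)]
    by (intro B.finsum_cong') (auto simp: Pi_def lin_smult)
  finally show ?thesis .
qed

lemma free_lift_basis:
  assumes c: "c \<in> carrier (free_mod R L)"
  shows "free_lift R L (free_mod R L) (free_basis R) c = c"
proof
  fix y
  let ?S = "{x \<in> carrier L. c x \<noteq> \<zero>}"
  have fin: "finite ?S" using free_mod_carrierD[OF c] by (auto elim: finite_subset[rotated])
  have "free_lift R L (free_mod R L) (free_basis R) c y = (\<Oplus>x\<in>?S. c x \<otimes> free_basis R x y)"
    unfolding free_lift_def using free_basis_closed free_mod_carrierD(1)[OF c]
    by (subst free_mod_finsum_apply[OF fin]) (auto intro!: free_mod_smult_closed)
  also have "\<dots> = (\<Oplus>x\<in>?S. if y = x then c x else \<zero>)"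
    using free_mod_carrierD(1)[OF c] by (intro finsum_cong') (auto simp: free_basis_def)
  also have "\<dots> = c y"
  proof (cases "y \<in> ?S")
    case True
    then show ?thesis using fin free_mod_carrierD(1)[OF c] by (intro add.finprod_singleton) auto
  next
    case False
    then have "c y = \<zero>" using free_mod_carrierD(4)[OF c, of y] by auto
    moreover have "(\<Oplus>x\<in>?S. if y = x then c x else \<zero>) = \<zero>"
      using False by (intro add.finprod_one_eqI) auto
    ultimately show ?thesis by simp
  qed
  finally show "free_lift R L (free_mod R L) (free_basis R) c y = c y" .
qed

lemma lin_free_mod_eq_free_lift:
  assumes "module R B" "lin R (free_mod R L) B f" "c \<in> carrier (free_mod R L)"
  shows "f c = free_lift R L B (\<lambda>x. f (free_basis R x)) c"
proof -
  have "f c = f (free_lift R L (free_mod R L) (free_basis R) c)"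
    by (simp only: free_lift_basis[OF assms(3)])
  also have "\<dots> = free_lift R L B (\<lambda>x. f (free_basis R x)) c"
    by (intro lin_free_lift[OF free_mod_module assms(1,2) _ assms(3)] funcsetI free_basis_closed)
  finally show ?thesis .
qed

lemma free_mod_projective: "projective_mod R (free_mod R L) Q"
  unfolding projective_mod_def
proof (intro conjI allI impI)
  show "module R (free_mod R L)" by (rule free_mod_module)
  fix A B :: "('r,'q) module" and g f
  assume "module R A \<and> module R B \<and> lin R A B g \<and> g ` carrier A = carrier B \<and> lin R (free_mod R L) B f"
  then have A: "module R A" and B: "module R B" and g: "lin R A B g" and surj: "g ` carrier A = carrier B"
    and f: "lin R (free_mod R L) B f" by auto
  interpret B: module R B by (rule B)
  have "\<forall>x\<in>carrier L. \<exists>a\<in>carrier A. g a = f (free_basis R x)"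
    using surj lin_closed[OF f free_basis_closed] by (metis imageE)
  then obtain s where s: "\<And>x. x \<in> carrier L \<Longrightarrow> s x \<in> carrier A \<and> g (s x) = f (free_basis R x)"
    by metis
  show "\<exists>h. lin R (free_mod R L) A h \<and> (\<forall>c\<in>carrier (free_mod R L). g (h c) = f c)"
  proof (intro exI conjI ballI)
    show "lin R (free_mod R L) A (free_lift R L A s)"
      using s by (intro free_lift_lin[OF A] funcsetI) simp
    fix c assume c: "c \<in> carrier (free_mod R L)"
    have "g (free_lift R L A s c) = free_lift R L B (\<lambda>x. g (s x)) c"
      using s by (intro lin_free_lift[OF A B g _ c] funcsetI) simp
    also have "\<dots> = free_lift R L B (\<lambda>x. f (free_basis R x)) c"
      unfolding free_lift_def using s lin_closed[OF f free_basis_closed] free_mod_carrierD(1)[OF c]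
      by (intro B.finsum_cong') (auto simp: Pi_def)
    also have "\<dots> = f c" using lin_free_mod_eq_free_lift[OF B f c] by simp
    finally show "g (free_lift R L A s c) = f c" .
  qed
qed

end

lemma lin_into_free_mod:
  "lin R X (free_ker R L) f \<Longrightarrow> lin R X (free_mod R L) f"
  by (auto simp: lin_def free_ker_def)

section \<open>The canonical free presentation\<close>

context
  fixes R :: "'r ring" (structure) and M :: "('r,'a) module"
  assumes M_module: "module R M"
begin

interpretation module R M by (rule M_module)

lemma free_proj_lin: "lin R (free_mod R M) M (free_proj R M)"
  unfolding free_proj_eq_free_lift by (rule free_lift_lin[OF is_cring M_module]) simp

lemma free_proj_basis:
  assumes "m \<in> carrier M"
  shows "free_proj R M (free_basis R m) = m"
proof -
  have "free_proj R M (free_basis R m) = finsum M (\<lambda>x. free_basis R m x \<odot>\<^bsub>M\<^esub> x) {m}"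
    unfolding free_proj_eq_free_lift using assms free_basis_closed[OF is_cring assms]
    by (intro free_lift_eq[OF is_cring M_module]) (auto simp: free_basis_def)
  then show ?thesis using assms by (simp add: free_basis_def)
qed

lemma free_ker_module: "module R (free_ker R M)"
proof -
  have "submodule {c \<in> carrier (free_mod R M). free_proj R M c = \<zero>\<^bsub>M\<^esub>} R (free_mod R M)"
    by (rule lin_kernel_submodule[OF free_mod_module[OF is_cring] M_module free_proj_lin])
  then show ?thesis
    using submodule.submodule_is_module[OF _ free_mod_module[OF is_cring]] by (simp add: free_ker_def)
qed

lemma free_short_exact: "short_exact R (free_ker R M) (free_mod R M) M (\<lambda>x. x) (free_proj R M)"
  unfolding short_exact_def
proof (intro conjI)
  show "lin R (free_ker R M) (free_mod R M) (\<lambda>x. x)" by (simp add: lin_def)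
  show "free_proj R M ` carrier (free_mod R M) = carrier M"
    using lin_closed[OF free_proj_lin] free_proj_basis free_basis_closed[OF is_cring]
    by (force intro: rev_image_eqI)
qed (simp_all add: free_ker_module free_mod_module[OF is_cring] M_module free_proj_lin)

lemma free_ker_torsionfree: "torsionfree R (free_ker R M)"
  unfolding torsionfree_def
proof (intro ballI impI)
  fix s c assume s: "s \<in> carrier R" and regular: "\<forall>t\<in>carrier R. s \<otimes> t = \<zero> \<longrightarrow> t = \<zero>"
    and c: "c \<in> carrier (free_ker R M)" and "s \<odot>\<^bsub>free_ker R M\<^esub> c = \<zero>\<^bsub>free_ker R M\<^esub>"
  then have "s \<otimes> c x = \<zero>" for x by (simp add: fun_eq_iff)
  moreover have "c x \<in> carrier R" for x using c by (simp add: free_mod_carrier)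
  ultimately show "c = \<zero>\<^bsub>free_ker R M\<^esub>"
    using regular by (simp add: fun_eq_iff)
qed

end

lemma lin_eq_if_free_proj_eq:
  assumes L: "module R L" and X: "module R X" and T: "lin R (free_mod R L) X T"
    and vanish: "\<forall>k\<in>carrier (free_ker R L). T k = \<zero>\<^bsub>X\<^esub>"
    and c: "c \<in> carrier (free_mod R L)" "c' \<in> carrier (free_mod R L)"
    and eq: "free_proj R L c = free_proj R L c'"
  shows "T c = T c'"
proof -
  interpret L: module R L by (rule L)
  interpret X: module R X by (rule X)
  interpret F: module R "free_mod R L" by (rule free_mod_module[OF L.is_cring])
  note \<pi> = free_proj_lin[OF L]
  have "free_proj R L (c \<ominus>\<^bsub>free_mod R L\<^esub> c') = \<zero>\<^bsub>L\<^esub>"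
    using lin_diff[OF F.module_axioms L \<pi> c] eq lin_closed[OF \<pi> c(2)] L.minus_eq_zero_iff by simp
  then have "T (c \<ominus>\<^bsub>free_mod R L\<^esub> c') = \<zero>\<^bsub>X\<^esub>"
    using vanish c by (simp del: free_mod_simps)
  then show ?thesis
    using lin_diff[OF F.module_axioms X T c] X.minus_eq_zero_iff lin_closed[OF T] c by simp
qed

lemma lin_through_free_proj:
  assumes L: "module R L" and X: "module R X" and T: "lin R (free_mod R L) X T"
    and vanish: "\<forall>k\<in>carrier (free_ker R L). T k = \<zero>\<^bsub>X\<^esub>"
  shows "lin R L X (\<lambda>y. T (free_basis R y))"
proof -
  interpret L: module R L by (rule L)
  interpret F: module R "free_mod R L" by (rule free_mod_module[OF L.is_cring])
  note \<pi> = free_proj_lin[OF L]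
  note resp = lin_eq_if_free_proj_eq[OF assms]
  have basis: "free_basis R y \<in> carrier (free_mod R L)" if "y \<in> carrier L" for y
    using free_basis_closed[OF L.is_cring that] .
  show ?thesis
    unfolding lin_def
  proof (intro conjI ballI)
    show "(\<lambda>y. T (free_basis R y)) \<in> carrier L \<rightarrow> carrier X"
      using lin_closed[OF T basis] by blast
  next
    fix x y assume xy: "x \<in> carrier L" "y \<in> carrier L"
    have "T (free_basis R (x \<oplus>\<^bsub>L\<^esub> y)) = T (free_basis R x \<oplus>\<^bsub>free_mod R L\<^esub> free_basis R y)"
    proof (rule resp)
      show "free_proj R L (free_basis R (x \<oplus>\<^bsub>L\<^esub> y))
          = free_proj R L (free_basis R x \<oplus>\<^bsub>free_mod R L\<^esub> free_basis R y)"
        using xy free_proj_basis[OF L] lin_add[OF \<pi> basis basis] by (simp del: free_mod_simps)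
    qed (use xy basis in \<open>simp_all del: free_mod_simps\<close>)
    then show "T (free_basis R (x \<oplus>\<^bsub>L\<^esub> y)) = T (free_basis R x) \<oplus>\<^bsub>X\<^esub> T (free_basis R y)"
      using lin_add[OF T basis basis] xy by simp
  next
    fix r x assume rx: "r \<in> carrier R" "x \<in> carrier L"
    have "T (free_basis R (r \<odot>\<^bsub>L\<^esub> x)) = T (r \<odot>\<^bsub>free_mod R L\<^esub> free_basis R x)"
    proof (rule resp)
      show "free_proj R L (free_basis R (r \<odot>\<^bsub>L\<^esub> x)) = free_proj R L (r \<odot>\<^bsub>free_mod R L\<^esub> free_basis R x)"
        using rx free_proj_basis[OF L] lin_smult[OF \<pi> _ basis] by (simp del: free_mod_simps)
    qed (use rx basis in \<open>simp_all del: free_mod_simps\<close>)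
    then show "T (free_basis R (r \<odot>\<^bsub>L\<^esub> x)) = r \<odot>\<^bsub>X\<^esub> T (free_basis R x)"
      using lin_smult[OF T _ basis] rx by simp
  qed
qed

section \<open>GV-ideals\<close>

lemma ideal_mod_simps [simp]:
  "carrier (ideal_mod R J) = J" "x \<oplus>\<^bsub>ideal_mod R J\<^esub> y = x \<oplus>\<^bsub>R\<^esub> y"
  "r \<odot>\<^bsub>ideal_mod R J\<^esub> x = r \<otimes>\<^bsub>R\<^esub> x" "\<zero>\<^bsub>ideal_mod R J\<^esub> = \<zero>\<^bsub>R\<^esub>"
  by (simp_all add: ideal_mod_def ring_mod_def)

lemma ring_mod_simps [simp]:
  "carrier (ring_mod R) = carrier R" "x \<oplus>\<^bsub>ring_mod R\<^esub> y = x \<oplus>\<^bsub>R\<^esub> y"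
  "r \<odot>\<^bsub>ring_mod R\<^esub> x = r \<otimes>\<^bsub>R\<^esub> x" "\<zero>\<^bsub>ring_mod R\<^esub> = \<zero>\<^bsub>R\<^esub>"
  by (simp_all add: ring_mod_def)

context
  fixes R :: "'r ring" (structure)
  assumes R_cring: "cring R"
begin

interpretation cring R by (rule R_cring)

lemma gv_ideal_subset: "gv_ideal R J \<Longrightarrow> J \<subseteq> carrier R"
  by (auto simp: gv_ideal_def dest: ideal.Icarr)

lemma gv_ideal_carrier: "gv_ideal R (carrier R)"
  unfolding gv_ideal_def
proof (intro conjI allI impI)
  show "ideal (carrier R) R" by (rule oneideal)
  show "\<exists>S. finite S \<and> S \<subseteq> carrier R \<and> carrier R = Idl S"
    by (intro exI[of _ "{\<one>}"]) (simp add: genideal_one)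
  fix \<phi> assume \<phi>: "lin R (ideal_mod R (carrier R)) (ring_mod R) \<phi>"
  have \<phi>1: "\<phi> \<one> \<in> carrier R" using lin_closed[OF \<phi>] by simp
  have mult: "\<phi> a = \<phi> \<one> \<otimes> a" if "a \<in> carrier R" for a
    using lin_smult[OF \<phi>, of a \<one>] \<phi>1 that by (simp add: m_comm[of a])
  show "\<exists>!r. r \<in> carrier R \<and> (\<forall>a\<in>carrier R. \<phi> a = r \<otimes> a)"
  proof (rule ex1I[of _ "\<phi> \<one>"])
    show "\<phi> \<one> \<in> carrier R \<and> (\<forall>a\<in>carrier R. \<phi> a = \<phi> \<one> \<otimes> a)" using \<phi>1 mult by blast
    fix r assume "r \<in> carrier R \<and> (\<forall>a\<in>carrier R. \<phi> a = r \<otimes> a)"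
    then show "r = \<phi> \<one>" by (metis one_closed r_one)
  qed
qed

lemma gv_ideal_annihilator_zero:
  assumes J: "gv_ideal R J" and r: "r \<in> carrier R" and kill: "\<forall>a\<in>J. r \<otimes> a = \<zero>"
  shows "r = \<zero>"
proof -
  have "lin R (ideal_mod R J) (ring_mod R) (\<lambda>a. \<zero>)" by (simp add: lin_def)
  then have "\<exists>!s. s \<in> carrier R \<and> (\<forall>a\<in>J. \<zero> = s \<otimes> a)"
    using J unfolding gv_ideal_def by blast
  moreover have "\<forall>a\<in>J. \<zero> = \<zero> \<otimes> a" using gv_ideal_subset[OF J] by auto
  ultimately show ?thesis using r kill by (metis zero_closed)
qed

lemma annihilator_ideal:
  assumes t: "t \<in> carrier R"
  shows "ideal {a \<in> carrier R. t \<otimes> a = \<zero>} R"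
proof (rule idealI)
  show "ring R" by (rule ring_axioms)
  show "subgroup {a \<in> carrier R. t \<otimes> a = \<zero>} (add_monoid R)"
    using t by (intro add.subgroupI) (auto simp: r_minus r_distr intro!: exI[of _ \<zero>])
next
  fix a x assume "a \<in> {a \<in> carrier R. t \<otimes> a = \<zero>}" "x \<in> carrier R"
  then show "x \<otimes> a \<in> {a \<in> carrier R. t \<otimes> a = \<zero>}" "a \<otimes> x \<in> {a \<in> carrier R. t \<otimes> a = \<zero>}"
    using t m_lcomm[of t x a] m_assoc[of t a x] by simp_all
qed

lemma gv_ideal_generators_annihilator_zero:
  assumes J: "gv_ideal R J" "J = Idl S" "S \<subseteq> carrier R" and t: "t \<in> carrier R"
    and kill: "\<forall>s\<in>S. t \<otimes> s = \<zero>"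
  shows "t = \<zero>"
proof -
  have "Idl S \<subseteq> {a \<in> carrier R. t \<otimes> a = \<zero>}"
    using J(3) kill by (intro genideal_minimal[OF annihilator_ideal[OF t]]) auto
  then show ?thesis using gv_ideal_annihilator_zero[OF J(1) t] J(2) by auto
qed

lemma free_mod_gv_annihilated_zero:
  assumes c: "c \<in> carrier (free_mod R L)" and J: "gv_ideal R J"
    and kill: "\<forall>a\<in>J. a \<odot>\<^bsub>free_mod R L\<^esub> c = \<zero>\<^bsub>free_mod R L\<^esub>"
  shows "c = \<zero>\<^bsub>free_mod R L\<^esub>"
proof -
  have "c x = \<zero>" for x
  proof (rule gv_ideal_annihilator_zero[OF J])
    show cx: "c x \<in> carrier R" using c by (simp add: free_mod_carrier)
    show "\<forall>a\<in>J. c x \<otimes> a = \<zero>"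
      using kill cx gv_ideal_subset[OF J] by (auto simp: fun_eq_iff m_comm)
  qed
  then show ?thesis by (simp add: fun_eq_iff)
qed

lemma lin_coordinate:
  assumes "lin R X (free_mod R L) f"
  shows "lin R X (ring_mod R) (\<lambda>a. f a x)"
  using assms by (fastforce simp: lin_def free_mod_carrier Pi_def)

text \<open>Every map J \<rightarrow> R is multiplication by an element, so a map J \<rightarrow> F is multiplication by
  the vector of these elements; its support is finite because a coordinate vanishing on
  the finitely many generators of J vanishes.\<close>

lemma free_mod_ext1_quot_zero:
  assumes J: "gv_ideal R J"
  shows "ext1_quot_zero R J (free_mod R L)"
  unfolding ext1_quot_zero_def
proof (intro allI impI)
  fix f assume f: "lin R (ideal_mod R J) (free_mod R L) f"
  have "\<exists>r. r \<in> carrier R \<and> (\<forall>a\<in>J. f a x = r \<otimes> a)" for x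
    using J lin_coordinate[OF f, of x] unfolding gv_ideal_def by blast
  then obtain c where c: "\<And>x. c x \<in> carrier R" "\<And>x a. a \<in> J \<Longrightarrow> f a x = c x \<otimes> a"
    by metis
  obtain S where S: "finite S" "S \<subseteq> carrier R" "J = Idl S"
    using J unfolding gv_ideal_def by auto
  have SJ: "S \<subseteq> J" using S genideal_self by auto
  have fS: "f s \<in> carrier (free_mod R L)" if "s \<in> S" for s
    using lin_closed[OF f] SJ that by auto
  have "{x. c x \<noteq> \<zero>} \<subseteq> (\<Union>s\<in>S. {x. f s x \<noteq> \<zero>})"
  proof (rule subsetI, rule ccontr)
    fix x assume "x \<in> {x. c x \<noteq> \<zero>}" "x \<notin> (\<Union>s\<in>S. {x. f s x \<noteq> \<zero>})"
    moreover have "\<forall>s\<in>S. c x \<otimes> s = \<zero>" using calculation(2) SJ by (force simp: c(2)[symmetric])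
    ultimately show False
      using gv_ideal_generators_annihilator_zero[OF J S(3,2) c(1)] by simp
  qed
  moreover have "finite (\<Union>s\<in>S. {x. f s x \<noteq> \<zero>})" "(\<Union>s\<in>S. {x. f s x \<noteq> \<zero>}) \<subseteq> carrier L"
    using S(1) fS by (auto simp: free_mod_carrier)
  ultimately have "c \<in> carrier (free_mod R L)"
    unfolding free_mod_carrier using c(1) by (auto intro: finite_subset)
  moreover have "\<forall>a\<in>J. f a = a \<odot>\<^bsub>free_mod R L\<^esub> c"
    using c gv_ideal_subset[OF J] by (auto simp: fun_eq_iff m_comm)
  ultimately show "\<exists>m\<in>carrier (free_mod R L). \<forall>a\<in>J. f a = a \<odot>\<^bsub>free_mod R L\<^esub> m" by blast
qed

end

lemma free_ker_gv_torsionfree: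
  assumes "module R M"
  shows "gv_torsionfree R (free_ker R M)"
proof -
  interpret module R M by fact
  interpret K: module R "free_ker R M" by (rule free_ker_module[OF assms])
  have "tor_gv R (free_ker R M) \<subseteq> {\<zero>\<^bsub>free_ker R M\<^esub>}"
    using free_mod_gv_annihilated_zero[OF is_cring] by (auto simp: tor_gv_def)
  moreover have "\<zero>\<^bsub>free_ker R M\<^esub> \<in> tor_gv R (free_ker R M)"
    unfolding tor_gv_def using gv_ideal_carrier[OF is_cring] K.zero_closed K.smult_r_null by blast
  ultimately show ?thesis unfolding gv_torsionfree_def by blast
qed

context
  fixes R :: "'r ring" (structure) and M :: "('r,'a) module"
  assumes M_module: "module R M" and M_gv_torsionfree: "gv_torsionfree R M"
begin

interpretation module R M by (rule M_module)

text \<open>The vector provided by the free module maps to a GV-torsion element of M, hence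
  lies in the kernel.\<close>

lemma free_ker_ext1_quot_zero:
  assumes J: "gv_ideal R J"
  shows "ext1_quot_zero R J (free_ker R M)"
  unfolding ext1_quot_zero_def
proof (intro allI impI)
  fix f assume f: "lin R (ideal_mod R J) (free_ker R M) f"
  obtain c where c: "c \<in> carrier (free_mod R M)" and fc: "\<forall>a\<in>J. f a = a \<odot>\<^bsub>free_mod R M\<^esub> c"
    using free_mod_ext1_quot_zero[OF is_cring J] lin_into_free_mod[OF f]
    unfolding ext1_quot_zero_def by blast
  have "a \<odot>\<^bsub>M\<^esub> free_proj R M c = \<zero>\<^bsub>M\<^esub>" if a: "a \<in> J" for a
  proof -
    have "a \<odot>\<^bsub>M\<^esub> free_proj R M c = free_proj R M (f a)"
      using lin_smult[OF free_proj_lin[OF M_module]] a gv_ideal_subset[OF is_cring J] c fc by auto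
    then show ?thesis using lin_closed[OF f] a by simp
  qed
  then have "free_proj R M c \<in> tor_gv R M"
    using J lin_closed[OF free_proj_lin[OF M_module] c] unfolding tor_gv_def by blast
  then have "c \<in> carrier (free_ker R M)"
    using M_gv_torsionfree c by (simp add: gv_torsionfree_def)
  then show "\<exists>m\<in>carrier (free_ker R M). \<forall>a\<in>J. f a = a \<odot>\<^bsub>free_ker R M\<^esub> m"
    using fc by auto
qed

lemma free_ker_w_module: "w_module R (free_ker R M)"
  unfolding w_module_def using free_ker_gv_torsionfree[OF M_module] free_ker_ext1_quot_zero by auto

end

section \<open>The w-envelope of a w-module\<close>

lemma w_module_gv_torsionfree: "w_module R M \<Longrightarrow> gv_torsionfree R M"
  by (simp add: w_module_def)

lemma quot_mod_zero_simps:
  assumes "module R M"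
  shows "carrier (quot_mod R M {\<zero>\<^bsub>M\<^esub>}) = (\<lambda>m. {m}) ` carrier M"
    and "x \<in> carrier M \<Longrightarrow> y \<in> carrier M \<Longrightarrow> {x} \<oplus>\<^bsub>quot_mod R M {\<zero>\<^bsub>M\<^esub>}\<^esub> {y} = {x \<oplus>\<^bsub>M\<^esub> y}"
    and "r \<in> carrier R \<Longrightarrow> x \<in> carrier M \<Longrightarrow> r \<odot>\<^bsub>quot_mod R M {\<zero>\<^bsub>M\<^esub>}\<^esub> {x} = {r \<odot>\<^bsub>M\<^esub> x}"
proof -
  interpret module R M by fact
  show "carrier (quot_mod R M {\<zero>\<^bsub>M\<^esub>}) = (\<lambda>m. {m}) ` carrier M"
    by (force simp: quot_mod_def A_RCOSETS_def' a_r_coset_def')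
  show "x \<in> carrier M \<Longrightarrow> y \<in> carrier M \<Longrightarrow> {x} \<oplus>\<^bsub>quot_mod R M {\<zero>\<^bsub>M\<^esub>}\<^esub> {y} = {x \<oplus>\<^bsub>M\<^esub> y}"
    by (simp add: quot_mod_def set_add_def')
  show "r \<in> carrier R \<Longrightarrow> x \<in> carrier M \<Longrightarrow> r \<odot>\<^bsub>quot_mod R M {\<zero>\<^bsub>M\<^esub>}\<^esub> {x} = {r \<odot>\<^bsub>M\<^esub> x}"
    by (simp add: quot_mod_def a_r_coset_def')
qed

lemma (in module) cyclic_submodule:
  assumes "y \<in> carrier M"
  shows "submodule ((\<lambda>r. r \<odot>\<^bsub>M\<^esub> y) ` carrier R) R M"
proof (rule submoduleI)
  show "\<zero>\<^bsub>M\<^esub> \<in> (\<lambda>r. r \<odot>\<^bsub>M\<^esub> y) ` carrier R"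
    using assms by (intro image_eqI[of _ _ \<zero>]) auto
  fix a b assume "a \<in> (\<lambda>r. r \<odot>\<^bsub>M\<^esub> y) ` carrier R" "b \<in> (\<lambda>r. r \<odot>\<^bsub>M\<^esub> y) ` carrier R"
  then obtain r s where rs: "r \<in> carrier R" "s \<in> carrier R" "a = r \<odot>\<^bsub>M\<^esub> y" "b = s \<odot>\<^bsub>M\<^esub> y"
    by auto
  show "\<ominus>\<^bsub>M\<^esub> a \<in> (\<lambda>r. r \<odot>\<^bsub>M\<^esub> y) ` carrier R"
    using rs assms by (intro image_eqI[of _ _ "\<ominus> r"]) (auto simp: smult_l_minus)
  show "a \<oplus>\<^bsub>M\<^esub> b \<in> (\<lambda>r. r \<odot>\<^bsub>M\<^esub> y) ` carrier R"
    using rs assms by (intro image_eqI[of _ _ "r \<oplus> s"]) (auto simp: smult_l_distr)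
next
  fix t a assume "t \<in> carrier R" "a \<in> (\<lambda>r. r \<odot>\<^bsub>M\<^esub> y) ` carrier R"
  then show "t \<odot>\<^bsub>M\<^esub> a \<in> (\<lambda>r. r \<odot>\<^bsub>M\<^esub> y) ` carrier R"
    using assms by (auto simp: smult_assoc1[symmetric])
qed (use assms in auto)

context
  fixes R :: "'r ring" (structure) and M :: "('r,'a) module"
    and E :: "('r,'e) module" and \<iota> :: "'a set \<Rightarrow> 'e"
  assumes M_module: "module R M" and M_w_module: "w_module R M"
    and envelope: "injective_envelope R (quot_mod R M {\<zero>\<^bsub>M\<^esub>}) E \<iota>"
begin

interpretation module R M by (rule M_module)

lemma envelope_module: "module R E"
  using envelope by (simp add: injective_envelope_def)

interpretation E: module R E by (rule envelope_module)

lemma envelope_lin: "lin R (quot_mod R M {\<zero>\<^bsub>M\<^esub>}) E \<iota>"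
  using envelope by (simp add: injective_envelope_def)

lemma embed_closed: "x \<in> carrier M \<Longrightarrow> \<iota> {x} \<in> carrier E"
  using lin_closed[OF envelope_lin] by (simp add: quot_mod_zero_simps[OF M_module])

lemma embed_add: "x \<in> carrier M \<Longrightarrow> y \<in> carrier M \<Longrightarrow> \<iota> {x \<oplus>\<^bsub>M\<^esub> y} = \<iota> {x} \<oplus>\<^bsub>E\<^esub> \<iota> {y}"
  using lin_add[OF envelope_lin, of "{x}" "{y}"] by (simp add: quot_mod_zero_simps[OF M_module])

lemma embed_smult: "r \<in> carrier R \<Longrightarrow> x \<in> carrier M \<Longrightarrow> \<iota> {r \<odot>\<^bsub>M\<^esub> x} = r \<odot>\<^bsub>E\<^esub> \<iota> {x}"
  using lin_smult[OF envelope_lin, of r "{x}"] by (simp add: quot_mod_zero_simps[OF M_module])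

lemma embed_inj: "x \<in> carrier M \<Longrightarrow> y \<in> carrier M \<Longrightarrow> \<iota> {x} = \<iota> {y} \<Longrightarrow> x = y"
  using envelope by (auto simp: injective_envelope_def quot_mod_zero_simps[OF M_module] inj_on_def)

lemma embed_zero: "\<iota> {\<zero>\<^bsub>M\<^esub>} = \<zero>\<^bsub>E\<^esub>"
  using embed_smult[of \<zero> "\<zero>\<^bsub>M\<^esub>"] embed_closed[of "\<zero>\<^bsub>M\<^esub>"] by simp

lemma embed_essential:
  assumes "submodule H R E" "H \<noteq> {\<zero>\<^bsub>E\<^esub>}"
  shows "\<exists>m\<in>carrier M. \<iota> {m} \<in> H \<and> \<iota> {m} \<noteq> \<zero>\<^bsub>E\<^esub>"
proof -
  have "\<zero>\<^bsub>E\<^esub> \<in> H \<inter> (\<lambda>m. \<iota> {m}) ` carrier M"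
    using subgroup.one_closed[OF submodule.axioms(1)[OF assms(1)]] embed_zero by force
  moreover have "H \<inter> (\<lambda>m. \<iota> {m}) ` carrier M \<noteq> {\<zero>\<^bsub>E\<^esub>}"
    using envelope assms by (simp add: injective_envelope_def quot_mod_zero_simps[OF M_module] image_image)
  ultimately show ?thesis by blast
qed

lemma envelope_gv_annihilated_zero:
  assumes y: "y \<in> carrier E" and J: "gv_ideal R J" and kill: "\<forall>a\<in>J. a \<odot>\<^bsub>E\<^esub> y = \<zero>\<^bsub>E\<^esub>"
  shows "y = \<zero>\<^bsub>E\<^esub>"
proof (rule ccontr)
  assume "y \<noteq> \<zero>\<^bsub>E\<^esub>"
  then have "(\<lambda>r. r \<odot>\<^bsub>E\<^esub> y) ` carrier R \<noteq> {\<zero>\<^bsub>E\<^esub>}"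
    using y by (auto intro!: image_eqI[of _ _ \<one>])
  then obtain m where "m \<in> carrier M" "\<iota> {m} \<in> (\<lambda>r. r \<odot>\<^bsub>E\<^esub> y) ` carrier R" "\<iota> {m} \<noteq> \<zero>\<^bsub>E\<^esub>"
    using embed_essential[OF E.cyclic_submodule[OF y]] by blast
  then obtain r where m: "m \<in> carrier M" "r \<in> carrier R" "\<iota> {m} = r \<odot>\<^bsub>E\<^esub> y" "\<iota> {m} \<noteq> \<zero>\<^bsub>E\<^esub>"
    by blast
  have "a \<odot>\<^bsub>M\<^esub> m = \<zero>\<^bsub>M\<^esub>" if a: "a \<in> J" for a
  proof -
    have aR: "a \<in> carrier R" using a gv_ideal_subset[OF is_cring J] by auto
    have "\<iota> {a \<odot>\<^bsub>M\<^esub> m} = a \<odot>\<^bsub>E\<^esub> (r \<odot>\<^bsub>E\<^esub> y)" using embed_smult aR m by simp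
    also have "\<dots> = r \<odot>\<^bsub>E\<^esub> (a \<odot>\<^bsub>E\<^esub> y)"
      using aR m(2) y by (simp add: E.smult_assoc1[symmetric] m_comm)
    also have "\<dots> = \<iota> {\<zero>\<^bsub>M\<^esub>}" using kill a m(2) embed_zero by simp
    finally show ?thesis using embed_inj aR m(1) by simp
  qed
  then have "m \<in> tor_gv R M" using J m(1) unfolding tor_gv_def by blast
  then show False
    using w_module_gv_torsionfree[OF M_w_module] m(4) embed_zero by (simp add: gv_torsionfree_def)
qed

lemma lin_embed_preimage:
  assumes J: "gv_ideal R J" and e: "e \<in> carrier E"
    and g: "\<And>a. a \<in> J \<Longrightarrow> g a \<in> carrier M \<and> \<iota> {g a} = a \<odot>\<^bsub>E\<^esub> e"
  shows "lin R (ideal_mod R J) M g"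
proof -
  have JR: "J \<subseteq> carrier R" by (rule gv_ideal_subset[OF is_cring J])
  have J_ideal: "ideal J R" using J by (simp add: gv_ideal_def)
  show ?thesis
    unfolding lin_def
  proof (intro conjI ballI)
    show "g \<in> carrier (ideal_mod R J) \<rightarrow> carrier M" using g by auto
  next
    fix a b assume "a \<in> carrier (ideal_mod R J)" "b \<in> carrier (ideal_mod R J)"
    then have ab: "a \<in> J" "b \<in> J" "a \<oplus> b \<in> J"
      using additive_subgroup.a_closed[OF ideal.axioms(1)[OF J_ideal]] by auto
    have "\<iota> {g (a \<oplus> b)} = \<iota> {g a \<oplus>\<^bsub>M\<^esub> g b}"
      using g ab JR e by (simp add: embed_add E.smult_l_distr subset_iff)
    then show "g (a \<oplus>\<^bsub>ideal_mod R J\<^esub> b) = g a \<oplus>\<^bsub>M\<^esub> g b"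
      using embed_inj g ab by simp
  next
    fix r a assume "r \<in> carrier R" "a \<in> carrier (ideal_mod R J)"
    then have ra: "r \<in> carrier R" "a \<in> J" "r \<otimes> a \<in> J"
      using ideal.I_l_closed[OF J_ideal] by auto
    have "\<iota> {g (r \<otimes> a)} = \<iota> {r \<odot>\<^bsub>M\<^esub> g a}"
      using g ra JR e by (simp add: embed_smult E.smult_assoc1 subset_iff)
    then show "g (r \<odot>\<^bsub>ideal_mod R J\<^esub> a) = r \<odot>\<^bsub>M\<^esub> g a"
      using embed_inj g ra by simp
  qed
qed

text \<open>M is its own w-envelope: the map a \<mapsto> a e is multiplication by some m \<in> M because M is a
  w-module, and then e - m is annihilated by J.\<close>

lemma embed_image_of_gv_multiples:
  assumes e: "e \<in> carrier E" and J: "gv_ideal R J"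
    and Je: "\<forall>a\<in>J. a \<odot>\<^bsub>E\<^esub> e \<in> (\<lambda>m. \<iota> {m}) ` carrier M"
  shows "e \<in> (\<lambda>m. \<iota> {m}) ` carrier M"
proof -
  have JR: "J \<subseteq> carrier R" by (rule gv_ideal_subset[OF is_cring J])
  have "\<forall>a\<in>J. \<exists>m. m \<in> carrier M \<and> \<iota> {m} = a \<odot>\<^bsub>E\<^esub> e"
    using Je by (force simp: image_iff)
  then obtain g where "\<forall>a\<in>J. g a \<in> carrier M \<and> \<iota> {g a} = a \<odot>\<^bsub>E\<^esub> e"
    by (auto dest!: bchoice)
  then have g: "\<And>a. a \<in> J \<Longrightarrow> g a \<in> carrier M \<and> \<iota> {g a} = a \<odot>\<^bsub>E\<^esub> e" by blast
  obtain m where m: "m \<in> carrier M" and gm: "\<forall>a\<in>J. g a = a \<odot>\<^bsub>M\<^esub> m"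
    using M_w_module J lin_embed_preimage[OF J e g] unfolding w_module_def ext1_quot_zero_def by blast
  have "a \<odot>\<^bsub>E\<^esub> (e \<ominus>\<^bsub>E\<^esub> \<iota> {m}) = \<zero>\<^bsub>E\<^esub>" if a: "a \<in> J" for a
  proof -
    have "a \<odot>\<^bsub>E\<^esub> e = a \<odot>\<^bsub>E\<^esub> \<iota> {m}"
      using g[OF a] gm a JR m by (auto simp: embed_smult)
    then show ?thesis
      using a JR e embed_closed[OF m]
      by (auto simp: E.minus_eq E.smult_r_distr E.smult_r_minus E.r_neg)
  qed
  then have "e \<ominus>\<^bsub>E\<^esub> \<iota> {m} = \<zero>\<^bsub>E\<^esub>"
    using envelope_gv_annihilated_zero J e embed_closed[OF m] by blast
  then have "e = \<iota> {m}"
    using e embed_closed[OF m] E.minus_eq_zero_iff by blast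
  then show ?thesis using m by blast
qed

lemma w_hull_carrier: "carrier (w_hull R (quot_mod R M {\<zero>\<^bsub>M\<^esub>}) E \<iota>) = (\<lambda>m. \<iota> {m}) ` carrier M"
proof -
  have hull: "carrier (w_hull R (quot_mod R M {\<zero>\<^bsub>M\<^esub>}) E \<iota>) =
    {e \<in> carrier E. \<exists>J. gv_ideal R J \<and> (\<forall>a\<in>J. a \<odot>\<^bsub>E\<^esub> e \<in> (\<lambda>m. \<iota> {m}) ` carrier M)}"
    by (simp add: w_hull_def quot_mod_zero_simps[OF M_module] image_image)
  have "(\<lambda>m. \<iota> {m}) ` carrier M \<subseteq> carrier (w_hull R (quot_mod R M {\<zero>\<^bsub>M\<^esub>}) E \<iota>)"
    unfolding hull using embed_closed embed_smult[symmetric] gv_ideal_carrier[OF is_cring] by blast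
  then show ?thesis unfolding hull using embed_image_of_gv_multiples by blast
qed

lemma w_hull_eq: "w_hull R (quot_mod R M {\<zero>\<^bsub>M\<^esub>}) E \<iota> = E\<lparr>carrier := (\<lambda>m. \<iota> {m}) ` carrier M\<rparr>"
proof -
  have "w_hull R (quot_mod R M {\<zero>\<^bsub>M\<^esub>}) E \<iota> = E\<lparr>carrier := carrier (w_hull R (quot_mod R M {\<zero>\<^bsub>M\<^esub>}) E \<iota>)\<rparr>"
    by (simp add: w_hull_def)
  then show ?thesis by (simp only: w_hull_carrier)
qed

lemma embed_lin_envelope: "lin R M E (\<lambda>m. \<iota> {m})"
  using embed_closed embed_add
    embed_smult
  by (simp add: lin_def)

lemma w_hull_module: "module R (w_hull R (quot_mod R M {\<zero>\<^bsub>M\<^esub>}) E \<iota>)"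
  unfolding w_hull_eq
  using submodule.submodule_is_module[OF lin_image_submodule[OF M_module _ embed_lin_envelope]]
    envelope_module by blast

lemma embed_lin_w_hull: "lin R M (w_hull R (quot_mod R M {\<zero>\<^bsub>M\<^esub>}) E \<iota>) (\<lambda>m. \<iota> {m})"
  using embed_lin_envelope unfolding w_hull_eq by (simp add: lin_def)

lemma embed_bij_w_hull: "bij_betw (\<lambda>m. \<iota> {m}) (carrier M) (carrier (w_hull R (quot_mod R M {\<zero>\<^bsub>M\<^esub>}) E \<iota>))"
  unfolding w_hull_carrier bij_betw_def inj_on_def
  using embed_inj by blast

end

section \<open>Lifting multiplication by elements of a GV-ideal\<close>

definition free_comap :: "'r ring \<Rightarrow> ('r,'a) module \<Rightarrow> ('a \<Rightarrow> 'l) \<Rightarrow> ('l \<Rightarrow> 'r) \<Rightarrow> 'a \<Rightarrow> 'r" where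
  "free_comap R M \<psi> c = (\<lambda>x. if x \<in> carrier M then c (\<psi> x) else \<zero>\<^bsub>R\<^esub>)"

context
  fixes R :: "'r ring" (structure) and M :: "('r,'a) module"
    and L :: "('r,'l) module" and \<psi> :: "'a \<Rightarrow> 'l"
  assumes M_module: "module R M" and L_module: "module R L"
    and \<psi>_lin: "lin R M L \<psi>" and \<psi>_bij: "bij_betw \<psi> (carrier M) (carrier L)"
begin

interpretation module R M by (rule M_module)
interpretation L: module R L by (rule L_module)

lemma free_comap_closed:
  assumes c: "c \<in> carrier (free_mod R L)"
  shows "free_comap R M \<psi> c \<in> carrier (free_mod R M)"
proof -
  have "{x. free_comap R M \<psi> c x \<noteq> \<zero>} = \<psi> -` {y. c y \<noteq> \<zero>} \<inter> carrier M"
    by (auto simp: free_comap_def)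
  moreover have "finite (\<psi> -` {y. c y \<noteq> \<zero>} \<inter> carrier M)"
    using c \<psi>_bij by (intro finite_vimage_IntI) (auto simp: free_mod_carrier bij_betw_def)
  ultimately show ?thesis using c by (auto simp: free_mod_carrier free_comap_def)
qed

lemma free_comap_lin: "lin R (free_mod R L) (free_mod R M) (free_comap R M \<psi>)"
  unfolding lin_def using free_comap_closed by (auto simp: free_comap_def fun_eq_iff)

lemma free_comap_basis: "m \<in> carrier M \<Longrightarrow> free_comap R M \<psi> (free_basis R (\<psi> m)) = free_basis R m"
  using \<psi>_bij by (auto simp: free_comap_def free_basis_def fun_eq_iff bij_betw_def inj_on_def)

lemma free_proj_free_comap:
  assumes c: "c \<in> carrier (free_mod R L)"
  shows "free_proj R L c = \<psi> (free_proj R M (free_comap R M \<psi> c))"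
proof -
  let ?c' = "free_comap R M \<psi> c" and ?S = "{x \<in> carrier M. free_comap R M \<psi> c x \<noteq> \<zero>}"
  have c': "?c' \<in> carrier (free_mod R M)" by (rule free_comap_closed[OF c])
  have S: "finite ?S" using free_mod_carrierD(2)[OF c'] by (auto elim: finite_subset[rotated])
  have "{y \<in> carrier L. c y \<noteq> \<zero>} = \<psi> ` ?S"
    using \<psi>_bij by (auto simp: free_comap_def bij_betw_def)
  then have "free_proj R L c = finsum L (\<lambda>y. c y \<odot>\<^bsub>L\<^esub> y) (\<psi> ` ?S)"
    by (simp add: free_proj_def)
  also have "\<dots> = finsum L (\<lambda>x. c (\<psi> x) \<odot>\<^bsub>L\<^esub> \<psi> x) ?S"
    using \<psi>_bij c lin_closed[OF \<psi>_lin]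
    by (intro L.finsum_reindex) (auto simp: bij_betw_def inj_on_def free_mod_carrier)
  also have "\<dots> = finsum L (\<lambda>x. \<psi> (?c' x \<odot>\<^bsub>M\<^esub> x)) ?S"
    using c lin_smult[OF \<psi>_lin] by (intro L.finsum_cong') (auto simp: free_comap_def free_mod_carrier
        intro!: lin_closed[OF \<psi>_lin])
  also have "\<dots> = \<psi> (free_proj R M ?c')"
    unfolding free_proj_def using S free_mod_carrierD(1)[OF c']
    by (intro lin_finsum[OF M_module L_module \<psi>_lin, symmetric]) auto
  finally show ?thesis .
qed

lemma free_comap_ker_lin: "lin R (free_ker R L) (free_ker R M) (free_comap R M \<psi>)"
proof -
  have "free_comap R M \<psi> c \<in> carrier (free_ker R M)" if c: "c \<in> carrier (free_ker R L)" for c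
  proof -
    have cF: "c \<in> carrier (free_mod R L)" using c by simp
    have "\<psi> (free_proj R M (free_comap R M \<psi> c)) = \<psi> \<zero>\<^bsub>M\<^esub>"
      using c free_proj_free_comap[OF cF] lin_zero[OF M_module L_module \<psi>_lin] by simp
    then show ?thesis
      using \<psi>_bij lin_closed[OF free_proj_lin[OF M_module] free_comap_closed[OF cF]] free_comap_closed[OF cF]
      by (auto simp: bij_betw_def inj_on_def)
  qed
  then show ?thesis
    using free_comap_lin by (auto simp: lin_def free_ker_def)
qed

text \<open>If d times the class of the comparison map K(L) \<rightarrow> K(M) vanishes in Ext^1(L, K(M)),
  i.e. d\<cdot>free_comap extends to some g on F(L), then d\<cdot>free_comap - g kills K(L) and so factors
  through L \<cong> M; the resulting map M \<rightarrow> F(M) lifts multiplication by d.\<close>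

lemma free_proj_lift_smult_of_extension:
  assumes dR: "d \<in> carrier R" and g: "lin R (free_mod R L) (free_ker R M) g"
    and gk: "\<forall>k\<in>carrier (free_ker R L). g k = d \<odot>\<^bsub>free_ker R M\<^esub> free_comap R M \<psi> k"
  shows "\<exists>h. lin R M (free_mod R M) h \<and> (\<forall>x\<in>carrier M. free_proj R M (h x) = d \<odot>\<^bsub>M\<^esub> x)"
proof -
  let ?F = "free_mod R M" and ?\<alpha> = "free_comap R M \<psi>"
  interpret F: module R ?F by (rule free_mod_module[OF is_cring])
  define T where "T c = d \<odot>\<^bsub>?F\<^esub> ?\<alpha> c \<ominus>\<^bsub>?F\<^esub> g c" for c
  have T: "lin R (free_mod R L) ?F T"
    unfolding T_def using free_comap_lin dR lin_into_free_mod[OF g]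
    by (intro lin_compose_diff lin_compose_smult F.module_axioms)
  have vanish: "\<forall>k\<in>carrier (free_ker R L). T k = \<zero>\<^bsub>?F\<^esub>"
  proof
    fix k assume k: "k \<in> carrier (free_ker R L)"
    have "g k = d \<odot>\<^bsub>?F\<^esub> ?\<alpha> k" using gk k by simp
    moreover have "d \<odot>\<^bsub>?F\<^esub> ?\<alpha> k \<in> carrier ?F"
      using k dR free_comap_closed by (simp del: free_mod_simps)
    ultimately show "T k = \<zero>\<^bsub>?F\<^esub>"
      unfolding T_def using F.minus_eq_zero_iff by (simp del: free_mod_simps)
  qed
  have "free_proj R M (T (free_basis R (\<psi> x))) = d \<odot>\<^bsub>M\<^esub> x" if x: "x \<in> carrier M" for x
  proof -
    let ?b = "free_basis R (\<psi> x)"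
    note \<pi> = free_proj_lin[OF M_module]
    have b: "?b \<in> carrier (free_mod R L)"
      using free_basis_closed[OF is_cring lin_closed[OF \<psi>_lin x]] .
    have gb: "g ?b \<in> carrier (free_ker R M)" using lin_closed[OF g b] .
    have "free_proj R M (T ?b) = free_proj R M (d \<odot>\<^bsub>?F\<^esub> ?\<alpha> ?b) \<ominus>\<^bsub>M\<^esub> free_proj R M (g ?b)"
      unfolding T_def using gb dR free_comap_closed[OF b]
      by (intro lin_diff[OF F.module_axioms M_module \<pi>] F.smult_closed) simp_all
    also have "\<dots> = d \<odot>\<^bsub>M\<^esub> x \<ominus>\<^bsub>M\<^esub> \<zero>\<^bsub>M\<^esub>"
      using gb dR x lin_smult[OF \<pi> dR free_comap_closed[OF b]]
      by (simp add: free_comap_basis[OF x] free_proj_basis[OF M_module])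
    also have "\<dots> = d \<odot>\<^bsub>M\<^esub> x" using dR x by (simp add: minus_eq)
    finally show ?thesis .
  qed
  moreover have "lin R M ?F (\<lambda>m. T (free_basis R (\<psi> m)))"
    by (rule lin_comp[OF \<psi>_lin lin_through_free_proj[OF L_module F.module_axioms T vanish]])
  ultimately show ?thesis by blast
qed

lemma free_proj_gv_split_of_ext1_gv_torsion:
  assumes "ext1_gv_torsion R L (free_ker R M)"
  shows "\<exists>J. gv_ideal R J \<and>
    (\<forall>d\<in>J. \<exists>h. lin R M (free_mod R M) h \<and> (\<forall>x\<in>carrier M. free_proj R M (h x) = d \<odot>\<^bsub>M\<^esub> x))"
proof -
  obtain J where J: "gv_ideal R J" and ext: "\<forall>d\<in>J. \<exists>g. lin R (free_mod R L) (free_ker R M) g \<and>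
      (\<forall>k\<in>carrier (free_ker R L). g k = d \<odot>\<^bsub>free_ker R M\<^esub> free_comap R M \<psi> k)"
    using assms free_comap_ker_lin unfolding ext1_gv_torsion_def by blast
  then show ?thesis
    using free_proj_lift_smult_of_extension gv_ideal_subset[OF is_cring J] by blast
qed

end

lemma w_split_seqI:
  assumes "cring R" "gv_ideal R J"
    and "\<forall>d\<in>J. \<exists>h. lin R C B h \<and> (\<forall>x\<in>carrier C. g (h x) = d \<odot>\<^bsub>C\<^esub> x)"
  shows "w_split_seq R C B g"
proof -
  interpret cring R by fact
  obtain S where S: "finite S" "S \<subseteq> carrier R" "J = Idl\<^bsub>R\<^esub> S"
    using assms(2) unfolding gv_ideal_def by auto
  obtain ds where "set ds = S" using finite_list[OF S(1)] by blast
  moreover have "S \<subseteq> J" using S genideal_self by auto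
  ultimately show ?thesis
    unfolding w_split_seq_def using assms(2,3) S by (intro exI[of _ J] exI[of _ ds]) auto
qed

theorem proposition2p8:
  fixes R :: "'r ring" and M :: "('r,'a) module"
  assumes "cring R"
    and "module R M"
    and "w_module R M"
    and "w_projective R M TYPE('e)"
  shows "w_split R M TYPE('q)"
proof -
  have "tor_gv R M = {\<zero>\<^bsub>M\<^esub>}"
    using w_module_gv_torsionfree[OF assms(3)] by (simp add: gv_torsionfree_def)
  then obtain E :: "('r,'e) module" and \<iota> where env: "injective_envelope R (quot_mod R M {\<zero>\<^bsub>M\<^esub>}) E \<iota>"
    and ext: "\<forall>N::('r,'a \<Rightarrow> 'r) module. module R N \<and> torsionfree R N \<and> w_module R N \<longrightarrow>
      ext1_gv_torsion R (w_hull R (quot_mod R M {\<zero>\<^bsub>M\<^esub>}) E \<iota>) N"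
    using assms(4) unfolding w_projective_def by auto
  have "ext1_gv_torsion R (w_hull R (quot_mod R M {\<zero>\<^bsub>M\<^esub>}) E \<iota>) (free_ker R M)"
    using ext free_ker_module[OF assms(2)] free_ker_torsionfree[OF assms(2)]
      free_ker_w_module[OF assms(2) w_module_gv_torsionfree[OF assms(3)]] by blast
  then obtain J where "gv_ideal R J"
    and "\<forall>d\<in>J. \<exists>h. lin R M (free_mod R M) h \<and> (\<forall>x\<in>carrier M. free_proj R M (h x) = d \<odot>\<^bsub>M\<^esub> x)"
    using free_proj_gv_split_of_ext1_gv_torsion[OF assms(2) w_hull_module[OF assms(2,3) env]
        embed_lin_w_hull[OF assms(2,3) env] embed_bij_w_hull[OF assms(2,3) env]] by blast
  then have "w_split_seq R M (free_mod R M) (free_proj R M)"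
    by (rule w_split_seqI[OF assms(1)])
  then show ?thesis
    unfolding w_split_def using free_mod_projective[OF assms(1)] free_short_exact[OF assms(2)] by blast
qed

end
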